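(* For $m\in\mathbb{N}$ let \[ x_m=(-1)^{m-1}\sum_{\ell=0}^{m}(-1)^{\ell-1}S(m,\ell)(2\ell-3)!!, \] so that $(x_1,x_2,x_3,x_4,x_5,x_6,\dots)=(1,0,1,3,16,105,\dots)$. For integers $n\ge k\ge0$ let $P(n,k)=k!\,[2(n-k)-1]!!\binom{2n-k-1}{2(n-k)}$. Then for all integers $n\ge k\ge 0$, \[ B_{n,k}(x_1,x_2,\dots,x_{n-k+1})=\frac{(-1)^n}{k!}\sum_{\ell=k}^{n}(-1)^{\ell}S(n,\ell)P(\ell,k). \]
   Context: $S(n,\ell)$ are the Stirling numbers of the second kind, given by $\frac{(e^x-1)^\ell}{\ell!}=\sum_{n\ge \ell}S(n,\ell)\frac{x^n}{n!}$. The Bell polynomials of the second kind are \[ B_{n,k}(x_1,\dots,x_{n-k+1})=\sum\frac{n!}{\prod_{i}\ell_i!}\prod_{i=1}^{n-k+1}\Big(\frac{x_i}{i!}\Big)^{\ell_i}, \] where the sum is over nonnegative integers $\ell_1,\dots,\ell_{n-k+1}$ with $\sum i\ell_i=n$ and $\sum\ell_i=k$. Double factorials: $(2j-1)!!=1\cdot3\cdots(2j-1)$ for $j\ge1$, and $[-(2j+1)]!!=(-1)^j/(2j-1)!!$ for $j\ge0$, so $(-1)!!=1$ and $(-3)!!=-1$. The binomial $\binom{2n-k-1}{2(n-k)}$ equals $1$ when $n=k$. *)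

theory Defs
  imports "HOL-Analysis.Analysis" "HOL-Combinatorics.Stirling"
begin

text \<open>odd_dfact j = (2j-1)!! for any integer j, with the convention
  [-(2i+1)]!! = (-1)^i / (2i-1)!! for i >= 0 and (-1)!! = 1.\<close>
definition odd_dfact :: "int \<Rightarrow> real" where
  "odd_dfact j = (if j \<ge> 0 then (\<Prod>i=1..nat j. real (2*i - 1))
                 else (-1) ^ nat (-j) / (\<Prod>i=1..nat (-j). real (2*i - 1)))"

definition xseq :: "nat \<Rightarrow> real" where
  "xseq m = (-1) ^ (m + 1) *
     (\<Sum>l=0..m. (-1) ^ (l + 1) * real (Stirling m l) * odd_dfact (int l - 1))"

definition Pnk :: "nat \<Rightarrow> nat \<Rightarrow> real" where
  "Pnk n k = fact k * odd_dfact (int n - int k) * real ((2*n - k - 1) choose (2*(n - k)))"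

definition bell_poly2 :: "nat \<Rightarrow> nat \<Rightarrow> (nat \<Rightarrow> real) \<Rightarrow> real" where
  "bell_poly2 n k x =
     (\<Sum>l \<in> {l \<in> {1..n-k+1} \<rightarrow>\<^sub>E {0..n}.
              (\<Sum>i=1..n-k+1. i * l i) = n \<and> (\<Sum>i=1..n-k+1. l i) = k}.
        fact n / (\<Prod>i=1..n-k+1. fact (l i)) * (\<Prod>i=1..n-k+1. (x i / fact i) ^ l i))"

end

theory Submission
  imports Defs "HOL-Computational_Algebra.Formal_Power_Series"
begin

text \<open>
  Put F(t) = sum_{m >= 1} x_m t^m / m!. By the multinomial theorem, B_{n,k}(x) = n!/k! [t^n] F(t)^k.
  The coefficient of t^n/n! in (1 - e^{-t})^l is (-1)^(n+l) l! S(n,l), so the definition of x_m says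
  exactly that F = G o (1 - e^{-t}) for G(u) = 1 - sqrt(1 - 2u), whence F^k = G^k o (1 - e^{-t}).
  It remains to show [u^l] G(u)^k = P(l,k)/l!: from G^2 = 2G - 2u we get
  G^(k+2) = 2 G^(k+1) - 2u G^k, and the closed form of the coefficients follows by induction on k.
\<close>

unbundle no vec_syntax and fps_syntax

lemma fps_power_nth_eq_if_nth_eq:
  fixes f g :: "'a::comm_semiring_1 fps"
  assumes f0: "f $ 0 = 0" and g0: "g $ 0 = 0" and fg: "\<And>i. i \<le> M \<Longrightarrow> f $ i = g $ i"
    and "n < M + k"
  shows "(f ^ k) $ n = (g ^ k) $ n"
  using \<open>n < M + k\<close>
proof (induction k arbitrary: n)
  case (Suc k)
  have "f $ i * (f ^ k) $ (n - i) = g $ i * (g ^ k) $ (n - i)" if "i \<le> n" for i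
  proof -
    consider "i = 0" | "0 < i" "i \<le> M" | "M < i" by linarith
    then show ?thesis
    proof cases
      case 2
      then show ?thesis
        using Suc fg by simp
    next
      case 3
      then have "n - i < k"
        using Suc.prems that by arith
      then show ?thesis
        using startsby_zero_power_prefix[OF f0] startsby_zero_power_prefix[OF g0] by simp
    qed (simp add: f0 g0)
  qed
  then show ?case
    by (simp add: fps_mult_nth)
qed simp

lemma sum_PiE_insert:
  assumes "x \<notin> A"
  shows "(\<Sum>g\<in>insert x A \<rightarrow>\<^sub>E S. f g) = (\<Sum>j\<in>S. \<Sum>g\<in>A \<rightarrow>\<^sub>E S. f (g(x := j)))"
proof -
  have "(\<Sum>g\<in>insert x A \<rightarrow>\<^sub>E S. f g) = (\<Sum>(j, g)\<in>S \<times> (A \<rightarrow>\<^sub>E S). f (g(x := j)))"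
    unfolding PiE_insert_eq
    by (subst sum.reindex[OF inj_combinator[OF assms]]) (simp add: case_prod_unfold)
  then show ?thesis
    by (simp add: sum.cartesian_product)
qed

lemma sum_insert_fun_upd:
  assumes "finite A" "x \<notin> A"
  shows "sum (g(x := j)) (insert x A) = j + sum g A"
proof -
  have "sum (g(x := j)) A = sum g A"
    using assms(2) by (intro sum.cong) auto
  then show ?thesis
    using assms by simp
qed

lemma prod_insert_fun_upd:
  assumes "finite A" "x \<notin> A"
  shows "(\<Prod>i\<in>insert x A. h i ((g(x := j)) i)) = h x j * (\<Prod>i\<in>A. h i (g i))"
proof -
  have "(\<Prod>i\<in>A. h i ((g(x := j)) i)) = (\<Prod>i\<in>A. h i (g i))"
    using assms(2) by (intro prod.cong) auto
  then show ?thesis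
    using assms by simp
qed

lemma prod_fps_monom_power:
  fixes c :: "nat \<Rightarrow> 'a::comm_semiring_1"
  assumes "finite A"
  shows "(\<Prod>i\<in>A. (fps_const (c i) * fps_X ^ i) ^ l i)
           = fps_const (\<Prod>i\<in>A. c i ^ l i) * fps_X ^ (\<Sum>i\<in>A. i * l i)"
  using assms
proof (induction A rule: finite_induct)
  case (insert x A)
  have "(fps_const (c x) * fps_X ^ x) ^ l x = fps_const (c x ^ l x) * fps_X ^ (x * l x)"
    by (simp add: power_mult_distrib power_mult)
  with insert show ?case
    by (simp add: power_add ac_simps del: fps_const_mult add: fps_const_mult[symmetric])
qed simp

lemma fps_sum_power_multinomial:
  fixes a :: "'b \<Rightarrow> 'a::field_char_0 fps"
  assumes "finite A" "k \<le> N"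
  shows "(\<Sum>i\<in>A. a i) ^ k =
    (\<Sum>l\<in>A \<rightarrow>\<^sub>E {0..N}. if sum l A = k
       then fps_const (fact k / (\<Prod>i\<in>A. fact (l i))) * (\<Prod>i\<in>A. a i ^ l i) else 0)"
  using assms
proof (induction A arbitrary: k rule: finite_induct)
  case (insert x A)
  define t where "t B k l = (if sum l B = k
       then fps_const (fact k / (\<Prod>i\<in>B. fact (l i))) * (\<Prod>i\<in>B. a i ^ l i) else 0)" for B k l
  have step: "of_nat (k choose j) * a x ^ j * t A (k - j) g = t (insert x A) k (g(x := j))"
    if "j \<le> k" for j g
  proof -
    have "of_nat (k choose j) * fps_const (fact (k - j) / P) = fps_const (fact k / (fact j * P))"
      for P :: 'a
      using that by (simp add: binomial_fact fps_of_nat[symmetric])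
    moreover have "sum (g(x := j)) (insert x A) = j + sum g A"
      using insert.hyps by (rule sum_insert_fun_upd)
    moreover have "(\<Prod>i\<in>insert x A. fact ((g(x := j)) i)) = fact j * (\<Prod>i\<in>A. fact (g i) :: 'a)"
      using insert.hyps by (rule prod_insert_fun_upd)
    moreover have "(\<Prod>i\<in>insert x A. a i ^ (g(x := j)) i) = a x ^ j * (\<Prod>i\<in>A. a i ^ g i)"
      using insert.hyps by (rule prod_insert_fun_upd)
    ultimately show ?thesis
      using that by (auto simp: t_def ac_simps)
  qed
  have "(\<Sum>i\<in>insert x A. a i) ^ k
      = (\<Sum>j\<le>k. of_nat (k choose j) * a x ^ j * (\<Sum>i\<in>A. a i) ^ (k - j))"
    using insert.hyps by (simp add: binomial_ring)
  also have "\<dots> = (\<Sum>j\<le>k. \<Sum>g\<in>A \<rightarrow>\<^sub>E {0..N}. of_nat (k choose j) * a x ^ j * t A (k - j) g)"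
    using insert.IH insert.prems by (simp add: t_def sum_distrib_left)
  also have "\<dots> = (\<Sum>j\<in>{0..N}. \<Sum>g\<in>A \<rightarrow>\<^sub>E {0..N}. t (insert x A) k (g(x := j)))"
  proof (rule sum.mono_neutral_cong_left)
    show "\<forall>j\<in>{0..N} - {..k}. (\<Sum>g\<in>A \<rightarrow>\<^sub>E {0..N}. t (insert x A) k (g(x := j))) = 0"
      using insert.hyps by (auto simp: t_def sum_insert_fun_upd)
  qed (use insert.prems step in auto)
  also have "\<dots> = (\<Sum>l\<in>insert x A \<rightarrow>\<^sub>E {0..N}. t (insert x A) k l)"
    using insert.hyps by (simp add: sum_PiE_insert)
  finally show ?case
    unfolding t_def .
qed (simp add: power_0_left)

definition egf_pos :: "(nat \<Rightarrow> real) \<Rightarrow> real fps" where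
  "egf_pos x = Abs_fps (\<lambda>m. if m = 0 then 0 else x m / fact m)"

lemma bell_poly2_eq_fps_power_nth:
  assumes "k \<le> n"
  shows "bell_poly2 n k x = fact n / fact k * (egf_pos x ^ k) $ n"
proof -
  define M where "M = n - k + 1"
  define c where "c i = x i / fact i" for i
  define T where "T = (\<Sum>i\<in>{1..M}. fps_const (c i) * fps_X ^ i)"
  define coeff where "coeff l = fact k / (\<Prod>i\<in>{1..M}. fact (l i)) * (\<Prod>i\<in>{1..M}. c i ^ l i)"
    for l :: "nat \<Rightarrow> nat"
  have "T $ i = (if 1 \<le> i \<and> i \<le> M then c i else 0)" for i
    unfolding T_def fps_sum_nth by (simp add: if_distrib[of "\<lambda>y. _ * y"] cong: if_cong)
  then have "(egf_pos x ^ k) $ n = (T ^ k) $ n"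
    using assms
    by (intro fps_power_nth_eq_if_nth_eq[where M = M]) (auto simp: egf_pos_def c_def M_def)
  also have "T ^ k = (\<Sum>l\<in>{1..M} \<rightarrow>\<^sub>E {0..n}. if sum l {1..M} = k
       then fps_const (coeff l) * fps_X ^ (\<Sum>i\<in>{1..M}. i * l i) else 0)"
    unfolding T_def fps_sum_power_multinomial[OF finite_atLeastAtMost assms]
      prod_fps_monom_power[OF finite_atLeastAtMost]
    by (intro sum.cong refl) (simp add: coeff_def mult.assoc[symmetric])
  also have "\<dots> $ n = (\<Sum>l\<in>{1..M} \<rightarrow>\<^sub>E {0..n}.
      if (\<Sum>i\<in>{1..M}. i * l i) = n \<and> sum l {1..M} = k then coeff l else 0)"
    by (auto simp: fps_sum_nth intro!: sum.cong)
  finally show ?thesis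
    unfolding bell_poly2_def M_def coeff_def c_def
    by (simp add: sum.inter_filter finite_PiE sum_distrib_left if_distrib[of "\<lambda>y. _ * y"]
        cong: if_cong)
qed

lemma fps_exp_minus_one_power_nth:
  fixes c :: "'a::field_char_0"
  shows "((fps_exp c - 1) ^ l) $ n = c ^ n * fact l * of_nat (Stirling n l) / fact n"
proof (induction l arbitrary: n)
  case 0
  then show ?case
    by (cases n) simp_all
next
  case (Suc l)
  note IH_l = Suc.IH
  define D where "D = fps_exp c - 1"
  have "fps_deriv D = fps_const c * (D + 1)"
    by (simp add: D_def)
  \<comment> \<open>comparing coefficients in this ODE yields the recurrence of the Stirling numbers\<close>
  then have deriv:
    "fps_deriv (D ^ Suc l) = fps_const (of_nat (Suc l)) * fps_const c * (D ^ Suc l + D ^ l)"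
    by (simp only: fps_deriv_power diff_Suc_1) (simp add: algebra_simps del: fps_const_mult)
  show ?case
  proof (induction n)
    case 0
    have "D $ 0 = 0"
      by (simp add: D_def)
    then show ?case
      unfolding D_def[symmetric] by (simp add: startsby_zero_power)
  next
    case (Suc n)
    have "of_nat (Suc n) * (D ^ Suc l) $ Suc n = fps_deriv (D ^ Suc l) $ n"
      by (simp only: fps_deriv_nth Suc_eq_plus1)
    also have "\<dots> = of_nat (Suc l) * c * ((D ^ Suc l) $ n + (D ^ l) $ n)"
      by (simp only: deriv fps_const_mult fps_mult_left_const_nth fps_add_nth)
    finally have "(D ^ Suc l) $ Suc n
        = of_nat (Suc l) * c * ((D ^ Suc l) $ n + (D ^ l) $ n) / of_nat (Suc n)"
      by (simp add: field_simps del: power_Suc of_nat_Suc)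
    also have "\<dots> = of_nat (Suc l) * c * (c ^ n * fact (Suc l) * of_nat (Stirling n (Suc l)) / fact n
        + c ^ n * fact l * of_nat (Stirling n l) / fact n) / of_nat (Suc n)"
      using Suc.IH IH_l[of n] unfolding D_def by (simp only:)
    also have "\<dots> = c ^ Suc n * fact (Suc l) * of_nat (Stirling (Suc n) (Suc l)) / fact (Suc n)"
      by (simp add: field_simps)
    finally show ?case
      unfolding D_def .
  qed
qed

lemma one_minus_fps_exp_neg_power_nth:
  "((1 - fps_exp (-1)) ^ l) $ n = (-1) ^ (n + l) * fact l * real (Stirling n l) / fact n"
proof -
  have "(1 - fps_exp (-1)) ^ l = fps_const ((-1) ^ l) * (fps_exp (-1) - 1 :: real fps) ^ l"
  proof -
    have "1 - fps_exp (-1) = fps_const (-1) * (fps_exp (-1) - 1 :: real fps)"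
      by (simp add: algebra_simps flip: fps_const_neg)
    then show ?thesis
      by (simp add: power_mult_distrib)
  qed
  then show ?thesis
    by (simp add: fps_exp_minus_one_power_nth power_add)
qed

definition sqrt_series :: "real fps" where
  "sqrt_series = fps_binomial (1/2) oo (fps_const (-2) * fps_X)"

definition G_series :: "real fps" where
  "G_series = 1 - sqrt_series"

lemma sqrt_series_squared: "sqrt_series ^ 2 = 1 - 2 * fps_X"
proof -
  define L :: "real fps" where "L = fps_const (-2) * fps_X"
  have L0: "L $ 0 = 0"
    by (simp add: L_def)
  have "sqrt_series ^ 2 = fps_binomial (1/2) ^ 2 oo L"
    unfolding sqrt_series_def L_def[symmetric] by (rule fps_compose_power[OF L0])
  also have "fps_binomial (1/2) ^ 2 = (1 + fps_X :: real fps)"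
    by (simp add: fps_binomial_power fps_binomial_1)
  also have "(1 + fps_X) oo L = 1 + L"
    by (simp add: fps_compose_add_distrib L0)
  also have "1 + L = 1 - 2 * fps_X"
    by (simp add: L_def neg_numeral_fps_const)
  finally show ?thesis .
qed

lemma G_series_squared: "G_series ^ 2 = 2 * G_series - 2 * fps_X"
  using sqrt_series_squared unfolding G_series_def power2_eq_square by (simp add: algebra_simps)

lemma G_series_nth_0: "G_series $ 0 = 0"
  by (simp add: G_series_def sqrt_series_def)

lemma G_series_nth_Suc: "G_series $ Suc j = fact (2 * j) / (2 ^ j * fact j * fact (Suc j))"
proof -
  have "of_nat (Suc j) * ((1/2 :: real) gchoose Suc j) = 1/2 * ((-1/2) gchoose j)"
    using gbinomial_absorption[of j "1/2 :: real"] by simp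
  also have "(-1/2 :: real) gchoose j = (-1) ^ j * pochhammer (1/2) j / fact j"
    by (simp add: gbinomial_pochhammer)
  also have "pochhammer (1/2) j = fact (2 * j) / (4 ^ j * fact j :: real)"
    by (simp add: fact_double power_mult)
  finally have "((1/2 :: real) gchoose Suc j)
      = (-1) ^ j * fact (2 * j) / (2 * 4 ^ j * fact j * fact (Suc j))"
    by (simp add: field_simps del: of_nat_Suc)
  then have "G_series $ Suc j
      = 2 * ((-2) ^ j * (-1) ^ j) * fact (2 * j) / (2 * 4 ^ j * fact j * fact (Suc j))"
    by (simp add: G_series_def sqrt_series_def)
  also have "(-2) ^ j * (-1) ^ j = (2 ^ j :: real)"
    by (simp flip: power_mult_distrib)
  also have "(4 :: real) ^ j = 2 ^ j * 2 ^ j"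
    by (simp flip: power_mult_distrib)
  finally show ?thesis
    by simp
qed

definition G_power_coeff :: "nat \<Rightarrow> nat \<Rightarrow> real" where
  "G_power_coeff k j = (if k = 0 then (if j = 0 then 1 else 0)
     else of_nat k * fact (k + 2 * j - 1) / (2 ^ j * fact j * fact (k + j)))"

lemma G_power_coeff_rec:
  "G_power_coeff (k + 2) j = 2 * G_power_coeff (k + 1) (j + 1) - 2 * G_power_coeff k (j + 1)"
proof -
  define F :: real where "F = fact (k + 2 * j + 1)"
  define Q :: real where "Q = 2 ^ j * fact j * fact (k + j + 1)"
  have "Q \<noteq> 0"
    by (simp add: Q_def)
  have e1: "G_power_coeff (k + 2) j = (real k + 2) * F / (Q * (real k + real j + 2))"
    by (simp add: G_power_coeff_def F_def Q_def algebra_simps)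
  have e2: "G_power_coeff (k + 1) (j + 1) = (real k + 1) * (real k + 2 * real j + 2) * F
      / (2 * (real j + 1) * Q * (real k + real j + 2))"
    by (simp add: G_power_coeff_def F_def Q_def algebra_simps)
  have e3: "G_power_coeff k (j + 1) = real k * F / (2 * (real j + 1) * Q)"
    by (simp add: G_power_coeff_def F_def Q_def algebra_simps)
  have "(K + 2) * F / (Q * (K + J + 2))
      = 2 * ((K + 1) * (K + 2 * J + 2) * F / (2 * (J + 1) * Q * (K + J + 2)))
        - 2 * (K * F / (2 * (J + 1) * Q))"
    if "0 \<le> J" "0 \<le> K" for K J :: real
  proof -
    have "J + 1 \<noteq> 0" "K + J + 2 \<noteq> 0"
      using that by linarith+
    with \<open>Q \<noteq> 0\<close> show ?thesis
      by (simp add: divide_simps) (simp add: algebra_simps)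
  qed
  then show ?thesis
    unfolding e1 e2 e3 by simp
qed

lemma G_series_power_nth: "(G_series ^ k) $ (k + j) = G_power_coeff k j"
proof (induction k arbitrary: j rule: induct_nat_012)
  case 0
  then show ?case
    by (simp add: G_power_coeff_def)
next
  case 1
  then show ?case
    by (simp add: G_series_nth_Suc G_power_coeff_def)
next
  case (ge2 k)
  have "G_series ^ Suc (Suc k) = G_series ^ k * G_series ^ 2"
    by (simp add: power_add[symmetric])
  also have "\<dots> = fps_const 2 * (G_series ^ Suc k - fps_X * G_series ^ k)"
    by (simp add: G_series_squared algebra_simps numeral_fps_const)
  finally have "(G_series ^ Suc (Suc k)) $ (Suc (Suc k) + j)
      = 2 * ((G_series ^ Suc k) $ (Suc k + (j + 1)) - (G_series ^ k) $ (k + (j + 1)))"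
    by (simp del: power_Suc)
  also have "\<dots> = 2 * (G_power_coeff (Suc k) (j + 1) - G_power_coeff k (j + 1))"
    by (simp only: ge2.IH)
  also have "\<dots> = G_power_coeff (Suc (Suc k)) j"
    using G_power_coeff_rec[of k j] by simp
  finally show ?case .
qed

lemma odd_dfact_of_nat: "odd_dfact (int j) = fact (2 * j) / (2 ^ j * fact j)"
proof (induction j)
  case (Suc j)
  have "odd_dfact (int m) = (\<Prod>i=1..m. real (2 * i - 1))" for m
    by (simp add: odd_dfact_def)
  then have "odd_dfact (int (Suc j)) = odd_dfact (int j) * (2 * real j + 1)"
    by (simp only:) (simp add: prod.nat_ivl_Suc')
  also have "\<dots> = fact (2 * Suc j) / (2 ^ Suc j * fact (Suc j))"
  proof -
    have "real j + 1 \<noteq> 0"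
      by linarith
    then show ?thesis
      unfolding Suc.IH by (simp add: divide_simps)
  qed
  finally show ?case .
qed (simp add: odd_dfact_def)

lemma Pnk_eq_G_power_coeff: "Pnk (k + j) k = fact (k + j) * G_power_coeff k j"
proof (cases k)
  case 0
  then show ?thesis
    by (cases j) (simp_all add: Pnk_def G_power_coeff_def odd_dfact_def binomial_eq_0)
next
  case (Suc k')
  have "real ((2 * (k + j) - k - 1) choose (2 * (k + j - k)))
      = fact (k' + 2 * j) / (fact (2 * j) * fact k')"
    using binomial_fact[of "2 * j" "k' + 2 * j", where 'a = real] Suc by (simp add: algebra_simps)
  then have "Pnk (k + j) k
      = fact k * (fact (2 * j) / (2 ^ j * fact j)) * (fact (k' + 2 * j) / (fact (2 * j) * fact k'))"
    by (simp add: Pnk_def odd_dfact_of_nat)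
  then show ?thesis
    using Suc by (simp add: G_power_coeff_def divide_simps)
qed

lemma G_series_nth: "0 < l \<Longrightarrow> G_series $ l = odd_dfact (int l - 1) / fact l"
  by (cases l) (simp_all add: G_series_nth_Suc odd_dfact_of_nat field_simps)

lemma egf_pos_xseq: "egf_pos xseq = G_series oo (1 - fps_exp (-1))"
proof (rule fps_ext)
  fix m
  show "egf_pos xseq $ m = (G_series oo (1 - fps_exp (-1))) $ m"
  proof (cases "m = 0")
    case False
    then have "Stirling m 0 = 0"
      by (cases m) simp_all
    have "G_series $ l * ((1 - fps_exp (-1)) ^ l) $ m
        = (-1) ^ (m + 1) * ((-1) ^ (l + 1) * real (Stirling m l) * odd_dfact (int l - 1)) / fact m"
      for l
      using False \<open>Stirling m 0 = 0\<close>
      by (cases "l = 0")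
         (simp_all add: G_series_nth_0 G_series_nth one_minus_fps_exp_neg_power_nth power_add field_simps)
    then show ?thesis
      using False by (simp add: egf_pos_def xseq_def fps_compose_nth sum_distrib_left sum_divide_distrib)
  qed (simp add: egf_pos_def G_series_nth_0)
qed

theorem theorem3p4:
  fixes n k :: nat
  assumes "k \<le> n"
  shows "bell_poly2 n k xseq =
    (-1) ^ n / fact k * (\<Sum>l=k..n. (-1) ^ l * real (Stirling n l) * Pnk l k)"
proof -
  define W :: "real fps" where "W = 1 - fps_exp (-1)"
  have "egf_pos xseq ^ k = G_series ^ k oo W"
    unfolding egf_pos_xseq W_def by (rule fps_compose_power) simp
  then have "(egf_pos xseq ^ k) $ n = (\<Sum>l=k..n. (G_series ^ k) $ l * (W ^ l) $ n)"
    using startsby_zero_power_prefix[OF G_series_nth_0, of k]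
    by (simp add: fps_compose_nth) (rule sum.mono_neutral_right; auto)
  also have "\<dots> = (\<Sum>l=k..n. Pnk l k / fact l * ((-1) ^ (n + l) * fact l * real (Stirling n l) / fact n))"
  proof (rule sum.cong)
    fix l assume "l \<in> {k..n}"
    then obtain j where "l = k + j"
      using le_Suc_ex by auto
    then show "(G_series ^ k) $ l * (W ^ l) $ n
        = Pnk l k / fact l * ((-1) ^ (n + l) * fact l * real (Stirling n l) / fact n)"
      by (simp add: W_def G_series_power_nth Pnk_eq_G_power_coeff one_minus_fps_exp_neg_power_nth)
  qed simp
  finally show ?thesis
    using assms by (simp add: bell_poly2_eq_fps_power_nth sum_distrib_left power_add field_simps)
qed

end
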